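(* Let $\delta>0$. For any $m>64\pi^2$, $\kappa>0$ and $\mu^\star>0$ one can find $\varepsilon\in(0,1)$, $\ell>0$ and $\gamma>0$ such that: $\ell\ge\delta$; $$-2^5\xi^2+(\mu^\star\varepsilon+6\ell)\xi-(\gamma+1)\ell\le0\quad\text{for all }\xi\in\mathbb{R};$$ $2\gamma^2-3\ell\ge0$; $e^{\varepsilon}<\frac{1+2\kappa}{1+\kappa}$; $e^{(\gamma+1)\varepsilon}(1+3\varepsilon^3)<\frac{m}{64\pi^2}$; and $$g(t):=e^{(\ell-\delta)t}\big(1+(\varepsilon-\ell t)^3\big)\ge1+\varepsilon^3\quad\text{for all }t\in(0,\varepsilon/\ell).$$ *)

theory Defs
  imports Complex_Main
begin

end

theory Submission
  imports Defs
begin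

text \<open>Take \<open>l = 2\<delta>\<close> and \<open>\<gamma>\<close> large; the two exponential bounds hold strictly at \<open>\<epsilon> = 0\<close>,
  hence for all small \<open>\<epsilon>\<close>. The quadratic in \<open>\<xi>\<close> is nonpositive once its discriminant is,
  which a large \<open>\<gamma>\<close> ensures uniformly in \<open>\<epsilon> < 1\<close>. For the last condition put
  \<open>s = l t \<in> (0, \<epsilon>)\<close>: then \<open>(l - \<delta>) t = s / 2\<close>, and the loss
  \<open>\<epsilon>\<^sup>3 - (\<epsilon> - s)\<^sup>3 \<le> 3 \<epsilon>\<^sup>2 s\<close> is dominated by the gain \<open>exp (s / 2) - 1 \<ge> s / 2\<close>
  as long as \<open>6 \<epsilon>\<^sup>2 \<le> 1\<close>.\<close>

lemma neg_quadratic_nonpos: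
  fixes a b c x :: real
  assumes "a > 0" and "b\<^sup>2 \<le> 4 * a * c"
  shows "- a * x\<^sup>2 + b * x - c \<le> 0"
proof -
  have "4 * a * (- a * x\<^sup>2 + b * x - c) = b\<^sup>2 - 4 * a * c - (2 * a * x - b)\<^sup>2"
    by (simp add: power2_eq_square algebra_simps)
  also have "\<dots> \<le> 0"
    using assms(2) zero_le_power2[of "2 * a * x - b"] by linarith
  finally show ?thesis
    using assms(1) by (simp add: mult_le_0_iff)
qed

lemma one_add_cube_le_exp_mult:
  fixes e s :: real
  assumes "0 < s" and "s \<le> e" and "6 * e\<^sup>2 \<le> 1"
  shows "1 + e ^ 3 \<le> exp (s / 2) * (1 + (e - s) ^ 3)"
proof -
  have "e ^ 3 - (e - s) ^ 3 = s * (3 * e\<^sup>2 - 3 * e * s + s\<^sup>2)"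
    by (simp add: power3_eq_cube power2_eq_square algebra_simps)
  also have "\<dots> \<le> s * (1 / 2)"
  proof (rule mult_left_mono)
    have "s * s \<le> (3 * e) * s"
      using assms(1,2) by (intro mult_right_mono) auto
    then show "3 * e\<^sup>2 - 3 * e * s + s\<^sup>2 \<le> 1 / 2"
      using assms(3) by (simp add: power2_eq_square)
  qed (use assms(1) in simp)
  moreover have "0 \<le> s / 2 * (e - s) ^ 3"
    using assms(1,2) by simp
  ultimately have "1 + e ^ 3 \<le> (1 + s / 2) * (1 + (e - s) ^ 3)"
    by (simp add: algebra_simps)
  also have "\<dots> \<le> exp (s / 2) * (1 + (e - s) ^ 3)"
    using assms(2) by (intro mult_right_mono) auto
  finally show ?thesis .
qed

lemma small_parameter_exists:
  fixes c K M :: real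
  assumes "K > 1" and "M > 1"
  shows "\<exists>\<epsilon>. 0 < \<epsilon> \<and> \<epsilon> < 1 \<and> 6 * \<epsilon>\<^sup>2 \<le> 1 \<and> exp \<epsilon> < K \<and> exp (c * \<epsilon>) * (1 + 3 * \<epsilon> ^ 3) < M"
proof -
  have lim: "((\<lambda>e. e) \<longlongrightarrow> 0) (at_right (0::real))"
    "((\<lambda>e. 6 * e\<^sup>2) \<longlongrightarrow> 6 * 0\<^sup>2) (at_right (0::real))"
    "((\<lambda>e. exp e) \<longlongrightarrow> exp 0) (at_right (0::real))"
    "((\<lambda>e. exp (c * e) * (1 + 3 * e ^ 3)) \<longlongrightarrow> exp (c * 0) * (1 + 3 * 0 ^ 3)) (at_right (0::real))"
    by (intro tendsto_intros)+
  have "\<forall>\<^sub>F e in at_right 0. 0 < e \<and> e < 1 \<and> 6 * e\<^sup>2 < 1 \<and> exp e < K \<and> exp (c * e) * (1 + 3 * e ^ 3) < M"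
    using order_tendstoD(2)[OF lim(1), of 1] order_tendstoD(2)[OF lim(2), of 1]
      order_tendstoD(2)[OF lim(3), of K] order_tendstoD(2)[OF lim(4), of M] assms
    by (simp add: eventually_conj_iff eventually_at_right_less)
  then obtain \<epsilon> where "0 < \<epsilon> \<and> \<epsilon> < 1 \<and> 6 * \<epsilon>\<^sup>2 < 1 \<and> exp \<epsilon> < K \<and> exp (c * \<epsilon>) * (1 + 3 * \<epsilon> ^ 3) < M"
    using eventually_happens'[OF trivial_limit_at_right_real] by blast
  then show ?thesis
    by (intro exI[of _ \<epsilon>]) auto
qed

lemma large_parameter_exists:
  fixes \<delta> B :: real
  assumes "\<delta> > 0"
  shows "\<exists>\<gamma> \<ge> 1. 3 * \<delta> \<le> \<gamma>\<^sup>2 \<and> B \<le> 256 * \<delta> * (\<gamma> + 1)"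
proof (intro exI conjI)
  define \<gamma> where "\<gamma> = 1 + 3 * \<delta> + \<bar>B\<bar> / (256 * \<delta>)"
  have "0 \<le> \<bar>B\<bar> / (256 * \<delta>)"
    using assms by simp
  then show "\<gamma> \<ge> 1"
    unfolding \<gamma>_def using assms by simp
  moreover have "3 * \<delta> \<le> \<gamma>"
    unfolding \<gamma>_def using \<open>0 \<le> \<bar>B\<bar> / (256 * \<delta>)\<close> by simp
  moreover have "\<gamma> \<le> \<gamma>\<^sup>2"
    using \<open>\<gamma> \<ge> 1\<close> by (simp add: power2_eq_square)
  ultimately show "3 * \<delta> \<le> \<gamma>\<^sup>2"
    by linarith
  have "B \<le> 256 * \<delta> * (\<bar>B\<bar> / (256 * \<delta>))"
    using assms by simp
  also have "\<dots> \<le> 256 * \<delta> * (\<gamma> + 1)"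
    unfolding \<gamma>_def using assms by (intro mult_left_mono) auto
  finally show "B \<le> 256 * \<delta> * (\<gamma> + 1)" .
qed

theorem lemma3p4:
  fixes \<delta> :: real
  assumes "\<delta> > 0"
  shows "\<forall>m \<kappa> \<mu>s :: real. m > 64 * pi\<^sup>2 \<longrightarrow> \<kappa> > 0 \<longrightarrow> \<mu>s > 0 \<longrightarrow>
    (\<exists>\<epsilon> l \<gamma> :: real. 0 < \<epsilon> \<and> \<epsilon> < 1 \<and> l > 0 \<and> \<gamma> > 0 \<and>
      l \<ge> \<delta> \<and>
      (\<forall>\<xi> :: real. - (2^5) * \<xi>\<^sup>2 + (\<mu>s * \<epsilon> + 6 * l) * \<xi> - (\<gamma> + 1) * l \<le> 0) \<and>
      2 * \<gamma>\<^sup>2 - 3 * l \<ge> 0 \<and>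
      exp \<epsilon> < (1 + 2 * \<kappa>) / (1 + \<kappa>) \<and>
      exp ((\<gamma> + 1) * \<epsilon>) * (1 + 3 * \<epsilon> ^ 3) < m / (64 * pi\<^sup>2) \<and>
      (\<forall>t. 0 < t \<and> t < \<epsilon> / l \<longrightarrow>
         exp ((l - \<delta>) * t) * (1 + (\<epsilon> - l * t) ^ 3) \<ge> 1 + \<epsilon> ^ 3))"
proof (intro allI impI)
  fix m \<kappa> \<mu>s :: real
  assume "m > 64 * pi\<^sup>2" and "\<kappa> > 0" and "\<mu>s > 0"
  obtain \<gamma> where "\<gamma> \<ge> 1" "3 * \<delta> \<le> \<gamma>\<^sup>2" and discr: "(\<mu>s + 12 * \<delta>)\<^sup>2 \<le> 256 * \<delta> * (\<gamma> + 1)"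
    using large_parameter_exists[OF assms] by blast
  obtain \<epsilon> where \<epsilon>: "0 < \<epsilon>" "\<epsilon> < 1" "6 * \<epsilon>\<^sup>2 \<le> 1" "exp \<epsilon> < (1 + 2 * \<kappa>) / (1 + \<kappa>)"
      "exp ((\<gamma> + 1) * \<epsilon>) * (1 + 3 * \<epsilon> ^ 3) < m / (64 * pi\<^sup>2)"
    using small_parameter_exists[of "(1 + 2 * \<kappa>) / (1 + \<kappa>)" "m / (64 * pi\<^sup>2)" "\<gamma> + 1"]
      \<open>\<kappa> > 0\<close> \<open>m > 64 * pi\<^sup>2\<close> by auto
  have "(\<mu>s * \<epsilon> + 12 * \<delta>)\<^sup>2 \<le> (\<mu>s + 12 * \<delta>)\<^sup>2"
    using \<epsilon> \<open>\<mu>s > 0\<close> assms by (intro power_mono) (auto intro: mult_left_le)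
  with discr have "(\<mu>s * \<epsilon> + 12 * \<delta>)\<^sup>2 \<le> 4 * 2^5 * ((\<gamma> + 1) * (2 * \<delta>))"
    by (simp add: algebra_simps)
  then have "- (2^5) * \<xi>\<^sup>2 + (\<mu>s * \<epsilon> + 6 * (2 * \<delta>)) * \<xi> - (\<gamma> + 1) * (2 * \<delta>) \<le> 0" for \<xi>
    by (intro neg_quadratic_nonpos) (simp_all add: algebra_simps)
  moreover have "exp ((2 * \<delta> - \<delta>) * t) * (1 + (\<epsilon> - 2 * \<delta> * t) ^ 3) \<ge> 1 + \<epsilon> ^ 3"
    if "0 < t" and "t < \<epsilon> / (2 * \<delta>)" for t
    using one_add_cube_le_exp_mult[of "2 * \<delta> * t" \<epsilon>] that \<epsilon> assms by (simp add: field_simps)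
  ultimately show "\<exists>\<epsilon> l \<gamma>. 0 < \<epsilon> \<and> \<epsilon> < 1 \<and> l > 0 \<and> \<gamma> > 0 \<and> l \<ge> \<delta> \<and>
      (\<forall>\<xi>. - (2^5) * \<xi>\<^sup>2 + (\<mu>s * \<epsilon> + 6 * l) * \<xi> - (\<gamma> + 1) * l \<le> 0) \<and>
      2 * \<gamma>\<^sup>2 - 3 * l \<ge> 0 \<and> exp \<epsilon> < (1 + 2 * \<kappa>) / (1 + \<kappa>) \<and>
      exp ((\<gamma> + 1) * \<epsilon>) * (1 + 3 * \<epsilon> ^ 3) < m / (64 * pi\<^sup>2) \<and>
      (\<forall>t. 0 < t \<and> t < \<epsilon> / l \<longrightarrow> exp ((l - \<delta>) * t) * (1 + (\<epsilon> - l * t) ^ 3) \<ge> 1 + \<epsilon> ^ 3)"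
    using \<epsilon> \<open>\<gamma> \<ge> 1\<close> \<open>3 * \<delta> \<le> \<gamma>\<^sup>2\<close> assms
    by (intro exI[of _ \<epsilon>] exI[of _ "2 * \<delta>"] exI[of _ \<gamma>]) auto
qed

end
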